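(* Let $n\ge 3$ and let $S$ be a double-$n$ string with diameter $d<n/2$, whose symbols are labeled $1,\dots,n$ in the order of their first occurrence in $S$. Then for each $1\le i\le d+1$, the number of symbols $j\in\{1,\dots,d+1\}\setminus\{i\}$ whose second occurrence lies at position-distance at most $d$ from the second occurrence of $i$ is at most $3d+i-n$.
   Context: A double-$n$ string is a string of length $2n$ over an alphabet of $n$ symbols in which each symbol appears exactly twice. Positions in the string are numbered $1,\dots,2n$; the position-distance between two entries is the absolute difference of their positions. The distance between two distinct symbols is the minimum position-distance between an occurrence of the first and an occurrence of the second. The diameter of a double-$n$ string is the maximum of the distance over all pairs of distinct symbols. *)

theory Defs
  imports Main
begin

text \<open>List index k (0-based) corresponds to position k+1;
position-distances are unaffected by this shift.\<close>

definition double_string :: "nat \<Rightarrow> nat list \<Rightarrow> bool" where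
  "double_string n S \<longleftrightarrow> length S = 2 * n \<and> set S \<subseteq> {1..n} \<and>
     (\<forall>a\<in>{1..n}. length (filter (\<lambda>x. x = a) S) = 2)"

definition pdist :: "nat \<Rightarrow> nat \<Rightarrow> nat" where
  "pdist i j = (if i \<le> j then j - i else i - j)"

definition sym_dist :: "nat list \<Rightarrow> nat \<Rightarrow> nat \<Rightarrow> nat" where
  "sym_dist S a b = Min {pdist i j | i j. i < length S \<and> j < length S \<and> S ! i = a \<and> S ! j = b}"

definition diameter :: "nat \<Rightarrow> nat list \<Rightarrow> nat" where
  "diameter n S = Max {sym_dist S a b | a b. a \<in> {1..n} \<and> b \<in> {1..n} \<and> a \<noteq> b}"

definition first_occ :: "nat list \<Rightarrow> nat \<Rightarrow> nat" where
  "first_occ S a = (LEAST k. k < length S \<and> S ! k = a)"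

definition second_occ :: "nat list \<Rightarrow> nat \<Rightarrow> nat" where
  "second_occ S a = (LEAST k. first_occ S a < k \<and> k < length S \<and> S ! k = a)"

definition first_occ_labelled :: "nat \<Rightarrow> nat list \<Rightarrow> bool" where
  "first_occ_labelled n S \<longleftrightarrow>
     (\<forall>a b. 1 \<le> a \<and> a < b \<and> b \<le> n \<longrightarrow> first_occ S a < first_occ S b)"

end

theory Submission
  imports Defs
begin

text \<open>The two occurrences of a symbol cannot both lie among the first \<open>d + 1\<close> positions:
otherwise no position beyond \<open>2d\<close> is within distance \<open>d\<close> of that symbol, so every other symbol
occurs at most once there, giving \<open>2n - 2d - 1 \<le> n - 1\<close>. Hence the first \<open>d + 1\<close> positions hold
the first occurrences of the symbols \<open>1, \<dots>, d + 1\<close>, in this order. Now fix \<open>i \<le> d + 1\<close> and let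
\<open>U\<close> be the positions in \<open>[0, i - 1 + d]\<close> or within distance \<open>d\<close> of the second occurrence of \<open>i\<close>,
except the two occurrences of \<open>i\<close>; then \<open>|U| \<le> 3d + i - 1\<close>. Every symbol \<open>j \<noteq> i\<close> occurs in \<open>U\<close>,
being within distance \<open>d\<close> of some occurrence of \<open>i\<close>, and each counted \<open>j\<close> occurs there twice.
Hence \<open>(n - 1) + count \<le> 3d + i - 1\<close>.\<close>

definition occ :: "nat list \<Rightarrow> nat \<Rightarrow> nat set" where
  "occ S a = {k. k < length S \<and> S ! k = a}"

lemma finite_occ [simp]: "finite (occ S a)"
  unfolding occ_def by auto

lemma disjoint_occ: "a \<noteq> b \<Longrightarrow> occ S a \<inter> occ S b = {}"
  unfolding occ_def by auto

lemma double_string_length: "double_string n S \<Longrightarrow> length S = 2 * n"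
  unfolding double_string_def by simp

lemma double_string_nth: "double_string n S \<Longrightarrow> k < length S \<Longrightarrow> S ! k \<in> {1..n}"
  unfolding double_string_def using nth_mem by blast

lemma card_occ:
  assumes "double_string n S" "a \<in> {1..n}"
  shows "card (occ S a) = 2"
proof -
  have "length (filter (\<lambda>x. x = a) S) = 2"
    using assms unfolding double_string_def by auto
  then show ?thesis
    unfolding occ_def length_filter_conv_card by simp
qed

lemma occ_eq_pair:
  assumes "double_string n S" "x \<noteq> y" "x < length S" "y < length S" "S ! x = S ! y"
  shows "occ S (S ! x) = {x, y}"
proof (rule sym, rule card_subset_eq)
  show "{x, y} \<subseteq> occ S (S ! x)"
    using assms unfolding occ_def by auto
  show "card {x, y} = card (occ S (S ! x))"
    using assms card_occ[OF assms(1) double_string_nth[OF assms(1,3)]] by simp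
qed simp

lemma occ_eq_first_second:
  assumes "double_string n S" "a \<in> {1..n}"
  shows "first_occ S a < second_occ S a" and "occ S a = {first_occ S a, second_occ S a}"
proof -
  obtain x y where "x < y" and xy: "occ S a = {x, y}"
  proof -
    obtain u v where "u \<noteq> v" "occ S a = {u, v}"
      using card_occ[OF assms] card_2_iff by metis
    then show thesis
      using that[of u v] that[of v u] by (metis insert_commute linorder_neqE_nat)
  qed
  have xs: "x \<in> occ S a" "y \<in> occ S a" using xy by auto
  have first: "first_occ S a = x"
    unfolding first_occ_def
  proof (rule Least_equality)
    show "x < length S \<and> S ! x = a" using xs unfolding occ_def by simp
  next
    fix k assume "k < length S \<and> S ! k = a"
    then have "k \<in> occ S a" unfolding occ_def by simp
    then show "x \<le> k" using xy \<open>x < y\<close> by auto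
  qed
  have "second_occ S a = y"
    unfolding second_occ_def first
  proof (rule Least_equality)
    show "x < y \<and> y < length S \<and> S ! y = a" using xs \<open>x < y\<close> unfolding occ_def by simp
  next
    fix k assume "x < k \<and> k < length S \<and> S ! k = a"
    then have "k \<in> occ S a" "x < k" unfolding occ_def by simp_all
    then show "y \<le> k" using xy by auto
  qed
  with first \<open>x < y\<close> xy show "first_occ S a < second_occ S a" "occ S a = {first_occ S a, second_occ S a}"
    by simp_all
qed

lemma close_occurrences:
  assumes ds: "double_string n S" and "a \<in> {1..n}" "b \<in> {1..n}" "a \<noteq> b"
  shows "\<exists>p\<in>occ S a. \<exists>q\<in>occ S b. pdist p q \<le> diameter n S"
proof -
  let ?D = "{pdist i j | i j. i < length S \<and> j < length S \<and> S ! i = a \<and> S ! j = b}"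
  have "?D \<subseteq> (\<lambda>(i, j). pdist i j) ` ({..<length S} \<times> {..<length S})"
    by force
  then have "finite ?D"
    by (rule finite_subset) auto
  moreover have "occ S a \<noteq> {}" "occ S b \<noteq> {}"
    using card_occ[OF ds] assms by (metis card.empty zero_neq_numeral)+
  then have "?D \<noteq> {}"
    unfolding occ_def by blast
  ultimately have "sym_dist S a b \<in> ?D"
    unfolding sym_dist_def by (rule Min_in)
  then obtain p q where "p \<in> occ S a" "q \<in> occ S b" "pdist p q = sym_dist S a b"
    unfolding occ_def by force
  moreover have "sym_dist S a b \<le> diameter n S"
    unfolding diameter_def
    by (rule Max_ge, rule finite_subset[of _ "(\<lambda>(a, b). sym_dist S a b) ` ({1..n} \<times> {1..n})"])
      (use assms in force)+
  ultimately show ?thesis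
    by metis
qed

lemma occ_meets_neighbourhood:
  assumes ds: "double_string n S" and a: "a \<in> {1..n}" and "b \<in> {1..n}" "a \<noteq> b"
    and "first_occ S a \<le> m"
  shows "occ S b \<inter> (({..m + diameter n S} \<union>
           {second_occ S a - diameter n S..second_occ S a + diameter n S}) - occ S a) \<noteq> {}"
  using close_occurrences[OF ds a, of b] occ_eq_first_second(2)[OF ds a] disjoint_occ[of b a S] assms
  by (fastforce simp: pdist_def split: if_splits)

lemma occ_subset_neighbourhood:
  assumes ds: "double_string n S" and "b \<in> {1..n}" "b \<noteq> a"
    and "first_occ S b \<le> m + d" "pdist (second_occ S b) (second_occ S a) \<le> d"
  shows "occ S b \<subseteq> ({..m + d} \<union> {second_occ S a - d..second_occ S a + d}) - occ S a"
  using occ_eq_first_second(2)[OF ds \<open>b \<in> {1..n}\<close>] disjoint_occ[OF \<open>b \<noteq> a\<close>, of S] assms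
  by (auto simp: pdist_def split: if_splits)

lemma initial_segment_distinct:
  assumes ds: "double_string n S" and dn: "2 * diameter n S < n"
    and pq: "p < q" "q \<le> diameter n S"
  shows "S ! p \<noteq> S ! q"
proof
  assume eq: "S ! p = S ! q"
  let ?d = "diameter n S" and ?a = "S ! p"
  let ?R = "{2 * ?d + 1..<2 * n}"
  have len: "length S = 2 * n"
    using ds by (rule double_string_length)
  have "q < length S"
    using dn pq len by simp
  then have occ_a: "occ S ?a = {p, q}" and a: "?a \<in> {1..n}"
    using occ_eq_pair[OF ds, of p q] double_string_nth[OF ds, of p] eq pq by auto
  have "inj_on (\<lambda>k. S ! k) ?R"
  proof (rule inj_onI, rule ccontr)
    fix x y
    assume R: "x \<in> ?R" "y \<in> ?R" and "S ! x = S ! y" "x \<noteq> y"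
    then have occ_b: "occ S (S ! x) = {x, y}" and b: "S ! x \<in> {1..n}"
      using occ_eq_pair[OF ds, of x y] double_string_nth[OF ds, of x] len by auto
    have "x \<notin> occ S ?a"
      using occ_a R pq by auto
    then have "S ! x \<noteq> ?a"
      using R len unfolding occ_def by auto
    then obtain p' q' where "p' \<in> {p, q}" "q' \<in> {x, y}" "pdist p' q' \<le> ?d"
      using close_occurrences[OF ds a b] occ_a occ_b by auto
    then show False
      using R pq unfolding pdist_def by auto
  qed
  moreover have "(\<lambda>k. S ! k) ` ?R \<subseteq> {1..n} - {?a}"
  proof
    fix z
    assume "z \<in> (\<lambda>k. S ! k) ` ?R"
    then obtain k where k: "k \<in> ?R" "z = S ! k"
      by blast
    moreover have "k \<notin> occ S ?a"
      using occ_a k pq by auto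
    ultimately show "z \<in> {1..n} - {?a}"
      using double_string_nth[OF ds, of k] len unfolding occ_def by auto
  qed
  ultimately have "card ?R \<le> card ({1..n} - {?a})"
    by (rule card_inj_on_le) simp
  then show False
    using a dn by simp
qed

lemma first_occ_nth_initial_segment:
  assumes ds: "double_string n S" and "2 * diameter n S < n" and "p \<le> diameter n S"
  shows "first_occ S (S ! p) = p"
proof -
  let ?a = "S ! p"
  have "p < length S"
    using assms double_string_length[OF ds] by simp
  then have a: "?a \<in> {1..n}" and "p \<in> occ S ?a"
    using double_string_nth[OF ds] unfolding occ_def by auto
  then have "p = first_occ S ?a \<or> p = second_occ S ?a"
    using occ_eq_first_second[OF ds a] by auto
  moreover have "S ! first_occ S ?a = ?a"
    using occ_eq_first_second[OF ds a] unfolding occ_def by auto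
  then have "p \<noteq> second_occ S ?a"
    using initial_segment_distinct[OF ds assms(2), of "first_occ S ?a" p] occ_eq_first_second[OF ds a] assms
    by auto
  ultimately show ?thesis
    by auto
qed

lemma first_occ_le_label:
  assumes ds: "double_string n S" and lab: "first_occ_labelled n S"
    and dn: "2 * diameter n S < n" and "1 \<le> j" "j \<le> diameter n S + 1"
  shows "first_occ S j \<le> j - 1"
proof (rule ccontr)
  assume late: "\<not> first_occ S j \<le> j - 1"
  have "inj_on (\<lambda>p. S ! p) {..<j}"
    using initial_segment_distinct[OF ds dn] assms
    by (intro inj_onI) (metis lessThan_iff linorder_neqE_nat Suc_eq_plus1 less_Suc_eq_le order.strict_trans2)
  moreover have "(\<lambda>p. S ! p) ` {..<j} \<subseteq> {1..<j}"
  proof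
    fix z
    assume "z \<in> (\<lambda>p. S ! p) ` {..<j}"
    then obtain p where p: "p < j" "z = S ! p"
      by blast
    have "p < length S"
      using p assms double_string_length[OF ds] by simp
    then have z: "z \<in> {1..n}"
      using double_string_nth[OF ds] p by simp
    have first: "first_occ S z = p"
      using first_occ_nth_initial_segment[OF ds dn] p assms by simp
    have "\<not> j < z"
      using lab[unfolded first_occ_labelled_def, rule_format, of j z] first p late z assms by auto
    moreover have "z \<noteq> j"
      using first p late by auto
    ultimately show "z \<in> {1..<j}"
      using z by simp
  qed
  ultimately have "card {..<j} \<le> card {1..<j}"
    by (rule card_inj_on_le) simp
  then show False
    using assms by simp
qed

lemma card_add_card_le_by_disjoint_traces:
  assumes "finite U" "finite K" "J \<subseteq> K"
    and disj: "\<And>a b. a \<in> K \<Longrightarrow> b \<in> K \<Longrightarrow> a \<noteq> b \<Longrightarrow> F a \<inter> F b = {}"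
    and one: "\<And>b. b \<in> K \<Longrightarrow> F b \<inter> U \<noteq> {}"
    and two: "\<And>b. b \<in> J \<Longrightarrow> card (F b \<inter> U) \<ge> 2"
  shows "card K + card J \<le> card U"
proof -
  have fin: "finite (F b \<inter> U)" for b
    using \<open>finite U\<close> by simp
  have "card K + card J = (\<Sum>b\<in>K - J. 1) + (\<Sum>b\<in>J. 2)"
    using assms(2,3) by (simp add: card_Diff_subset finite_subset card_mono)
  also have "\<dots> \<le> (\<Sum>b\<in>K - J. card (F b \<inter> U)) + (\<Sum>b\<in>J. card (F b \<inter> U))"
    using one two fin by (intro add_mono sum_mono) (auto simp: Suc_le_eq card_gt_0_iff)
  also have "\<dots> = (\<Sum>b\<in>K. card (F b \<inter> U))"
    by (rule sum.subset_diff[OF assms(3,2), symmetric])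
  also have "\<dots> = card (\<Union>b\<in>K. F b \<inter> U)"
    using disj fin \<open>finite K\<close> by (intro card_UN_disjoint[symmetric]) auto
  also have "\<dots> \<le> card U"
    using \<open>finite U\<close> by (intro card_mono) auto
  finally show ?thesis .
qed

lemma card_two_windows_le:
  fixes f s m d :: nat
  assumes "f \<noteq> s" "f \<le> m"
  shows "card (({..m} \<union> {s - d..s + d}) - {f, s}) \<le> m + 2 * d"
proof -
  have "card (({..m} \<union> {s - d..s + d}) - {f, s}) = card ({..m} \<union> {s - d..s + d}) - 2"
    using assms by (subst card_Diff_subset) auto
  moreover have "card ({..m} \<union> {s - d..s + d}) \<le> (m + 1) + (2 * d + 1)"
    using card_Un_le[of "{..m}" "{s - d..s + d}"] by simp
  ultimately show ?thesis
    by simp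
qed

theorem corollary3p5:
  fixes n d i :: nat and S :: "nat list"
  assumes "n \<ge> 3"
    and "double_string n S"
    and "first_occ_labelled n S"
    and "d = diameter n S"
    and "2 * d < n"
    and "1 \<le> i" and "i \<le> d + 1"
  shows "int (card {j \<in> {1..d+1} - {i}. pdist (second_occ S j) (second_occ S i) \<le> d})
           \<le> 3 * int d + int i - int n"
proof -
  note ds = assms(2) and lab = assms(3) and dn = assms(5)[unfolded assms(4)]
  define J where "J = {j \<in> {1..d+1} - {i}. pdist (second_occ S j) (second_occ S i) \<le> d}"
  define s where "s = second_occ S i"
  define U where "U = ({..i - 1 + d} \<union> {s - d..s + d}) - occ S i"
  have i: "i \<in> {1..n}"
    using assms by simp
  have occ_i: "occ S i = {first_occ S i, s}" and "first_occ S i \<noteq> s"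
    using occ_eq_first_second[OF ds i] unfolding s_def by auto
  have first_i: "first_occ S i \<le> i - 1"
    using first_occ_le_label[OF ds lab dn] assms by simp
  have "card U \<le> (i - 1 + d) + 2 * d"
    unfolding U_def occ_i
    by (rule card_two_windows_le) (use \<open>first_occ S i \<noteq> s\<close> first_i in auto)
  then have "card U \<le> 3 * d + i - 1"
    using \<open>1 \<le> i\<close> by simp
  moreover have "card ({1..n} - {i}) + card J \<le> card U"
  proof (rule card_add_card_le_by_disjoint_traces[where F = "occ S"])
    show "J \<subseteq> {1..n} - {i}"
      using assms unfolding J_def by auto
    show "occ S b \<inter> U \<noteq> {}" if "b \<in> {1..n} - {i}" for b
      using occ_meets_neighbourhood[OF ds i _ _ first_i, folded assms(4)] that unfolding U_def s_def by auto
    show "card (occ S j \<inter> U) \<ge> 2" if "j \<in> J" for j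
    proof -
      have j: "j \<in> {1..n}" "j \<noteq> i" and "first_occ S j \<le> j - 1"
        using that dn first_occ_le_label[OF ds lab dn] unfolding J_def assms(4) by auto
      then have "first_occ S j \<le> i - 1 + d"
        using that unfolding J_def by auto
      then have "occ S j \<subseteq> U"
        using occ_subset_neighbourhood[OF ds j] that unfolding U_def J_def s_def by auto
      then show ?thesis
        using card_occ[OF ds j(1)] by (simp add: Int_absorb2)
    qed
  qed (auto simp: U_def disjoint_occ)
  moreover have "card ({1..n} - {i}) = n - 1"
    using i by simp
  ultimately show ?thesis
    using \<open>1 \<le> i\<close> \<open>n \<ge> 3\<close> unfolding J_def by linarith
qed

end
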